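(* Let $n\ge 2$ be an integer. Suppose that for all integers $m,k$ with $2\le m\le n$ and $2\le k\le 2^{m-1}+1$ one has $$v_2\big(s(2^n,2^m-k)\big)=2^n-2^m-(n-m)\Big(2^m-2\Big\lfloor\frac{k}{2}\Big\rfloor\Big)+m-2-v_2\Big(\Big\lfloor\frac{k}{2}\Big\rfloor\Big)+(n-1)\epsilon_k,$$ where $\epsilon_k=0$ if $k$ is even and $\epsilon_k=1$ if $k$ is odd. Then for every integer $t$ with $1\le t\le 2^n$, $$v_2\big(s_{2^n}(2^n,t)\big)=v_2\big(s(2^n,t)\big)\quad\text{and}\quad v_2\big(s_{2^n}(2^n,t)-s(2^n,t)\big)\ge v_2\big(s(2^n,t)\big)+2.$$
   Context: The (unsigned) Stirling numbers of the first kind $s(n,k)$ are defined by $x(x+1)\cdots(x+n-1)=\sum_{k=0}^n s(n,k)x^k$. For a nonnegative integer $m$, $s_m(n,k)$ is defined by $(x+m)(x+m+1)\cdots(x+m+n-1)=\sum_{k=0}^n s_m(n,k)x^k$. $v_2$ is the $2$-adic valuation, with the convention $v_2(0)=+\infty$. *)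

theory Defs
  imports Complex_Main "HOL-Combinatorics.Stirling" "HOL-Computational_Algebra.Polynomial"
    "HOL-Computational_Algebra.Factorial_Ring" "HOL-Library.Extended_Real"
begin

text \<open>Unsigned Stirling numbers of the first kind s(n,k): library constant stirling n k.
  Shifted version s_m(n,k): coefficient of x^k in (x+m)(x+m+1)...(x+m+n-1).\<close>
definition stirling_shift :: "nat \<Rightarrow> nat \<Rightarrow> nat \<Rightarrow> nat" where
  "stirling_shift m n k = coeff (\<Prod>i<n. [: of_nat (m + i), 1 :]) k"

definition v2 :: "int \<Rightarrow> ereal" where
  "v2 x = (if x = 0 then \<infinity> else ereal (real (multiplicity (2::int) x)))"

end

theory Submission imports Defs begin

text \<open>Expanding (x + N)(x + N + 1)...(x + 2N - 1) = \<Sum>k. s(N,k) (x + N)^k gives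
  s_N(N,t) = s(N,t) + \<Sum>k>t. s(N,k) (k choose t) N^(k-t), so for N = 2^n it suffices that every
  tail term has valuation at least \<nu>(t) + 2, where \<nu>(t) = v2(s(2^n,t)).
  The hypothesis, together with s(N,N-1) = N choose 2 and s(N,N) = 1, writes \<nu>(t) as a term that is
  linear in t on each dyadic block plus a correction of absolute value below the block index. This
  gives \<nu>(t) + 2 \<le> \<nu>(k) + n(k - t) for t < k, except for k = t + 1 with t odd: there
  \<nu>(t) = \<nu>(t + 1) + n - 1 exactly, and (t + 1 choose t) = t + 1 supplies the missing factor 2.\<close>

lemma stirling_shift_eq_sum:
  "stirling_shift c N t = (\<Sum>k\<le>N. stirling N k * (k choose t) * c ^ (k - t))"
proof -
  have coeff_power: "coeff ([:c, 1:] ^ k) t = (k choose t) * c ^ (k - t)" for k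
    by (cases "t \<le> k")
      (use degree_linear_power[of c k] in \<open>auto simp: coeff_linear_poly_power coeff_eq_0 binomial_eq_0\<close>)
  have "(\<Prod>i<N. [:of_nat (c + i), 1:]) = (pochhammer :: nat poly \<Rightarrow> _) [:of_nat c, 1:] N"
    unfolding pochhammer_prod by (rule prod.cong) (auto simp: of_nat_poly lessThan_atLeast0)
  also have "\<dots> = (\<Sum>k\<le>N. of_nat (stirling N k) * [:of_nat c, 1:] ^ k)"
    by (rule stirling_pochhammer[symmetric])
  finally have "(\<Prod>i<N. [:of_nat (c + i), 1:]) = (\<Sum>k\<le>N. smult (stirling N k) ([:c, 1:] ^ k))"
    by (simp add: of_nat_poly)
  then show ?thesis
    unfolding stirling_shift_def by (simp add: coeff_sum coeff_power[unfolded One_nat_def] mult.assoc)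
qed

lemma stirling_shift_eq_stirling_plus_tail:
  assumes "t \<le> N"
  shows "stirling_shift c N t = stirling N t + (\<Sum>k\<in>{t<..N}. stirling N k * (k choose t) * c ^ (k - t))"
proof -
  have "stirling_shift c N t = (\<Sum>k\<in>{t..N}. stirling N k * (k choose t) * c ^ (k - t))"
    unfolding stirling_shift_eq_sum by (rule sum.mono_neutral_right) auto
  also have "\<dots> = stirling N t + (\<Sum>k\<in>{t<..N}. stirling N k * (k choose t) * c ^ (k - t))"
    using assms by (simp add: sum.atLeast_Suc_atMost atLeastSucAtMost_greaterThanAtMost)
  finally show ?thesis .
qed

lemma stirling_pos: "1 \<le> t \<Longrightarrow> t \<le> N \<Longrightarrow> stirling N t > 0"
proof (induction N arbitrary: t)
  case (Suc N)
  then obtain k where k: "t = Suc k" by (cases t) auto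
  show ?case
  proof (cases k)
    case 0
    show ?thesis unfolding k 0 stirling_Suc_n_1 by simp
  next
    case (Suc k')
    then show ?thesis using Suc.IH Suc.prems k by simp
  qed
qed simp

lemma v2_add_of_higher:
  fixes s r :: int
  assumes "s \<noteq> 0" and "2 ^ (multiplicity 2 s + 2) dvd r"
  shows "v2 (s + r) = v2 s" and "v2 r \<ge> v2 s + 2"
proof -
  have "v2 (s + r) = v2 s \<and> v2 r \<ge> v2 s + 2"
  proof (cases "r = 0")
    case False
    then have r: "multiplicity 2 r \<ge> multiplicity 2 s + 2"
      using assms(2) by (intro multiplicity_geI) auto
    then have sum: "multiplicity 2 (s + r) = multiplicity 2 s"
      using assms(1) False by (intro multiplicity_sum_lt) auto
    have "s + r \<noteq> 0"
    proof
      assume "s + r = 0"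
      then have "2 ^ (multiplicity 2 s + 2) dvd s"
        using assms(2) by (metis add.commute add_eq_0_iff dvd_minus_iff)
      then have "multiplicity 2 s + 2 \<le> multiplicity 2 s"
        using assms(1) by (intro multiplicity_geI) auto
      then show False by simp
    qed
    then show ?thesis
      using assms(1) False r sum by (simp add: v2_def)
  qed (use assms(1) in \<open>simp add: v2_def\<close>)
  then show "v2 (s + r) = v2 s" and "v2 r \<ge> v2 s + 2" by auto
qed

text \<open>For t \<ge> 1, the m with t = 2^m - k and 2 \<le> k \<le> 2^(m-1) + 1, as in the hypothesis.\<close>

definition block :: "nat \<Rightarrow> nat" where
  "block t = (LEAST m. t + 2 \<le> 2 ^ m)"

lemma block_upper: "t + 2 \<le> 2 ^ block t"
  unfolding block_def by (rule LeastI[of _ "t + 2"]) (use less_exp[of "t + 2"] in linarith)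

lemma block_pos: "block t \<ge> 1"
  using block_upper[of t] by (cases "block t") auto

lemma block_lower: "2 ^ (block t - 1) \<le> t + 1"
proof -
  have "block t - 1 < block t" using block_pos[of t] by simp
  then have "\<not> t + 2 \<le> 2 ^ (block t - 1)" unfolding block_def by (rule not_less_Least)
  then show ?thesis by simp
qed

lemma block_eqI:
  assumes "1 \<le> m" "2 ^ (m - 1) \<le> t + 1" "t + 2 \<le> 2 ^ m"
  shows "block t = m"
  unfolding block_def
proof (rule Least_equality)
  fix y assume y: "t + 2 \<le> (2::nat) ^ y"
  show "m \<le> y"
  proof (rule ccontr)
    assume "\<not> m \<le> y"
    then have "(2::nat) ^ y \<le> 2 ^ (m - 1)" by (intro power_increasing) auto
    with assms(2) y show False by linarith
  qed
qed (fact assms(3))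

lemma block_ge_2: "1 \<le> t \<Longrightarrow> 2 \<le> block t"
  using block_upper[of t] power_increasing[of "block t" 1 "2::nat"] by (cases "block t \<le> 1") auto

lemma block_Suc: "block (t + 1) = (if t + 2 = 2 ^ block t then block t + 1 else block t)"
proof (cases "t + 2 = 2 ^ block t")
  case True
  then have "block (t + 1) = block t + 1" by (intro block_eqI) auto
  then show ?thesis using True by simp
next
  case False
  with block_upper[of t] block_lower[of t] block_pos[of t] show ?thesis
    by (auto intro!: block_eqI)
qed

lemma block_Suc_of_odd: "odd t \<Longrightarrow> block (t + 1) = block t"
  using block_Suc[of t] block_pos[of t] by (auto dest: arg_cong[where f = even])

lemma block_pow2_minus_1: "1 \<le> n \<Longrightarrow> block (2 ^ n - 1) = n + 1"
  by (rule block_eqI) (auto simp: Suc_le_eq)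

lemma block_pow2: "1 \<le> n \<Longrightarrow> block (2 ^ n) = n + 1"
  using power_increasing[of 1 n "2::nat"] by (intro block_eqI) auto

text \<open>With m = block t, the hypothesis reads
  \<nu>(t) = main_term n t + (m - 1) (t mod 2) - v2((2^m - t) div 2).\<close>

definition main_term :: "nat \<Rightarrow> nat \<Rightarrow> int" where
  "main_term n t = 2 ^ n - 2 ^ block t + int (block t) - 2 - (int n - int (block t)) * int t"

lemma main_term_Suc: "main_term n t - main_term n (t + 1) = int n - int (block t)"
proof (cases "t + 2 = 2 ^ block t")
  case True
  then have "(2::int) ^ block t = int t + 2"
    by (metis of_nat_add of_nat_numeral of_nat_power)
  then show ?thesis
    using True block_Suc[of t] by (simp add: main_term_def algebra_simps)
next
  case False
  then show ?thesis
    using block_Suc[of t] by (simp add: main_term_def algebra_simps)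
qed

lemma main_term_diff_le:
  assumes "1 \<le> t" "t \<le> j"
  shows "main_term n t - main_term n j \<le> (int n - 2) * (int j - int t)"
  using assms(2)
proof (induction j rule: dec_induct)
  case (step j)
  have "main_term n t - main_term n (j + 1) = (main_term n t - main_term n j) + (int n - int (block j))"
    using main_term_Suc[of n j] by simp
  also have "\<dots> \<le> (int n - 2) * (int j - int t) + (int n - 2)"
    using step.IH block_ge_2[of j] step.hyps assms(1) by simp
  finally show ?case by (simp add: algebra_simps)
qed simp

definition nu :: "nat \<Rightarrow> nat \<Rightarrow> nat" where
  "nu n t = multiplicity 2 (int (stirling (2 ^ n) t))"

lemma v2_stirling_eq_nu: "1 \<le> t \<Longrightarrow> t \<le> 2 ^ n \<Longrightarrow> v2 (int (stirling (2 ^ n) t)) = real (nu n t)"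
  using stirling_pos[of t "2 ^ n"] by (simp add: v2_def nu_def)

lemma nu_pow2_minus_1:
  assumes "1 \<le> n"
  shows "nu n (2 ^ n - 1) = n - 1"
proof -
  have pow: "(2::nat) ^ n = Suc (2 ^ n - 1)" "(2::nat) ^ n = 2 * 2 ^ (n - 1)"
    using assms by (simp, cases n, simp_all)
  have "stirling (2 ^ n) (2 ^ n - 1) = 2 ^ n choose 2"
    by (metis pow(1) stirling_Suc_n_n)
  also have "\<dots> = 2 ^ (n - 1) * (2 ^ n - 1)"
    by (subst (1 2) pow(2)) (simp add: choose_two)
  finally have "int (stirling (2 ^ n) (2 ^ n - 1)) = 2 ^ (n - 1) * (2 ^ n - 1)"
    by simp
  moreover have "\<not> 2 dvd (2::int) ^ n - 1"
    using assms by simp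
  ultimately show ?thesis
    unfolding nu_def by (intro multiplicity_decomposeI) auto
qed

definition correction :: "nat \<Rightarrow> nat \<Rightarrow> int" where
  "correction n t = int (nu n t) - main_term n t"

lemma correction_pow2_minus_1:
  assumes "1 \<le> n"
  shows "correction n (2 ^ n - 1) = 1"
  unfolding correction_def main_term_def nu_pow2_minus_1[OF assms] block_pow2_minus_1[OF assms]
  using assms by (simp add: algebra_simps)

lemma correction_pow2: "1 \<le> n \<Longrightarrow> correction n (2 ^ n) = 1 - int n"
  by (simp add: correction_def main_term_def nu_def block_pow2 algebra_simps)

definition stirling_v2_formula :: "nat \<Rightarrow> bool" where
  "stirling_v2_formula n \<longleftrightarrow> (\<forall>m k. 2 \<le> m \<and> m \<le> n \<and> 2 \<le> k \<and> k \<le> 2 ^ (m - 1) + 1 \<longrightarrow>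
      v2 (int (stirling (2 ^ n) (2 ^ m - k))) =
        ereal (real_of_int (2 ^ n - 2 ^ m - (int n - int m) * (2 ^ m - 2 * int (k div 2))
                 + int m - 2 + (int n - 1) * (if even k then 0 else 1)))
        - v2 (int (k div 2)))"

lemma multiplicity_le_of_le_power:
  fixes p a :: int
  assumes "p > 1" "0 < a" "a \<le> p ^ j"
  shows "multiplicity p a \<le> j"
proof -
  have "p ^ multiplicity p a \<le> a"
    using assms(2) by (intro zdvd_imp_le multiplicity_dvd) auto
  with assms show ?thesis
    by (meson order.trans power_le_imp_le_exp)
qed

lemma block_half_bounds:
  assumes "1 \<le> t"
  shows "1 \<le> (2 ^ block t - t) div 2" "(2 ^ block t - t) div 2 \<le> 2 ^ (block t - 2)"
proof -
  obtain m where m: "block t = Suc (Suc m)"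
    using block_ge_2[OF assms] by (metis add_2_eq_Suc le_Suc_ex)
  show "1 \<le> (2 ^ block t - t) div 2"
    using block_upper[of t] by simp
  show "(2 ^ block t - t) div 2 \<le> 2 ^ (block t - 2)"
    using block_lower[of t] m by simp
qed

lemma correction_eq:
  assumes formula: "stirling_v2_formula n" and "1 \<le> t" "t + 2 \<le> 2 ^ n"
  shows "correction n t = (int (block t) - 1) * int (t mod 2)
    - int (multiplicity 2 (int ((2 ^ block t - t) div 2)))"
proof -
  define m where "m = block t"
  define k where "k = 2 ^ m - t"
  have m2: "2 \<le> m" unfolding m_def using block_ge_2 assms(2) .
  have up: "t + 2 \<le> 2 ^ m" and low: "2 ^ (m - 1) \<le> t + 1"
    unfolding m_def by (rule block_upper, rule block_lower)
  have pow: "(2::nat) ^ m = 2 * 2 ^ (m - 1)"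
    using m2 by (cases m) auto
  have "(2::nat) ^ (m - 1) < 2 ^ n"
    using low assms(3) by linarith
  then have "m \<le> n" using power_less_imp_less_exp[of 2 "m - 1" n] by simp
  moreover have k: "2 \<le> k" "k \<le> 2 ^ (m - 1) + 1" "2 ^ m - k = t"
    using up low pow unfolding k_def by linarith+
  ultimately have hyp: "v2 (int (stirling (2 ^ n) t)) =
      ereal (real_of_int (2 ^ n - 2 ^ m - (int n - int m) * (2 ^ m - 2 * int (k div 2))
               + int m - 2 + (int n - 1) * (if even k then 0 else 1)))
      - v2 (int (k div 2))"
    using formula m2 unfolding stirling_v2_formula_def by metis
  have "v2 (int (k div 2)) = real (multiplicity 2 (int (k div 2)))"
    using k(1) by (simp add: v2_def)
  then have "real (nu n t) = real_of_int (2 ^ n - 2 ^ m - (int n - int m) * (2 ^ m - 2 * int (k div 2))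
      + int m - 2 + (int n - 1) * (if even k then 0 else 1)) - real (multiplicity 2 (int (k div 2)))"
    using hyp assms v2_stirling_eq_nu[of t n] by simp
  then have nu_eq: "int (nu n t) = 2 ^ n - 2 ^ m - (int n - int m) * (2 ^ m - 2 * int (k div 2))
      + int m - 2 + (int n - 1) * (if even k then 0 else 1) - int (multiplicity 2 (int (k div 2)))"
    by linarith
  have half: "2 ^ m - 2 * int (k div 2) = int t + int (t mod 2)"
    and parity: "(if even k then 0 else 1) = int (t mod 2)"
  proof -
    have "k + t = 2 ^ m" "even ((2::nat) ^ m)" using up m2 unfolding k_def by auto
    then have km: "k mod 2 = t mod 2" by presburger
    have "int k = 2 ^ m - int t" using up unfolding k_def by simp
    moreover have "int k = 2 * int (k div 2) + int (k mod 2)"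
      by (metis div_mult_mod_eq mult.commute of_nat_add of_nat_mult of_nat_numeral)
    ultimately show "2 ^ m - 2 * int (k div 2) = int t + int (t mod 2)"
      using km by simp
    show "(if even k then 0 else 1) = int (t mod 2)"
      using km by (cases "even t") (simp_all add: even_iff_mod_2_eq_zero odd_iff_mod_2_eq_one)
  qed
  show ?thesis
    using nu_eq unfolding correction_def main_term_def m_def[symmetric] k_def[symmetric] half parity
    by (simp add: algebra_simps)
qed

lemma correction_bounds:
  assumes formula: "stirling_v2_formula n" and "2 \<le> n" "1 \<le> t" "t \<le> 2 ^ n"
  shows "2 - int (block t) \<le> correction n t" "correction n t \<le> int (block t) - 1"
    and "even t \<Longrightarrow> correction n t \<le> 0" "odd t \<Longrightarrow> 1 \<le> correction n t"
proof -
  have "(if odd t then 1 else 2 - int (block t)) \<le> correction n t \<and>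
        correction n t \<le> (if odd t then int (block t) - 1 else 0)"
  proof (cases "t + 2 \<le> 2 ^ n")
    case True
    define v where "v = multiplicity 2 (int ((2 ^ block t - t) div 2))"
    have "v \<le> block t - 2"
      unfolding v_def using block_half_bounds[OF assms(3)]
      by (intro multiplicity_le_of_le_power) (auto simp flip: of_nat_power)
    then show ?thesis
      using correction_eq[OF formula assms(3) True] block_ge_2[OF assms(3)]
      unfolding v_def[symmetric] by (auto simp: odd_iff_mod_2_eq_one even_iff_mod_2_eq_zero)
  next
    case False
    then have "t = 2 ^ n - 1 \<or> t = 2 ^ n" using assms(4) by auto
    then show ?thesis
      using assms(2) correction_pow2_minus_1 correction_pow2 block_pow2_minus_1 block_pow2
      by auto
  qed
  then show "2 - int (block t) \<le> correction n t" "correction n t \<le> int (block t) - 1"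
    and "even t \<Longrightarrow> correction n t \<le> 0" "odd t \<Longrightarrow> 1 \<le> correction n t"
    using block_ge_2[OF assms(3)] by (auto split: if_splits)
qed

lemma correction_Suc_of_odd:
  assumes formula: "stirling_v2_formula n" and "2 \<le> n" "1 \<le> t" "t + 1 \<le> 2 ^ n" "odd t"
  shows "correction n t - correction n (t + 1) = int (block t) - 1"
proof (cases "t + 3 \<le> 2 ^ n")
  case True
  have "even ((2::nat) ^ block t)" using block_pos[of t] by simp
  then obtain e where e: "(2::nat) ^ block t = 2 * e" by (rule evenE)
  have "(2 ^ block t - (t + 1)) div 2 = (2 ^ block t - t) div 2"
    using block_upper[of t] \<open>odd t\<close> unfolding e by presburger
  then show ?thesis
    using correction_eq[OF formula, of t] correction_eq[OF formula, of "t + 1"] True assms(3,5)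
      block_Suc_of_odd[OF assms(5)]
    by (simp add: odd_iff_mod_2_eq_one)
next
  case False
  have "even ((2::nat) ^ n)" using assms(2) by simp
  then obtain e where e: "(2::nat) ^ n = 2 * e" by (rule evenE)
  have "t = 2 ^ n - 1"
    using False assms(4,5) unfolding e by presburger
  then show ?thesis
    using assms(2) correction_pow2_minus_1 correction_pow2 block_pow2_minus_1 by simp
qed

lemma nu_Suc_of_odd:
  assumes formula: "stirling_v2_formula n" and "2 \<le> n" "1 \<le> t" "t + 1 \<le> 2 ^ n" "odd t"
  shows "nu n t = nu n (t + 1) + n - 1"
proof -
  have "int (nu n t) - int (nu n (t + 1)) = int n - 1"
    using main_term_Suc[of n t] correction_Suc_of_odd[OF assms] by (simp add: correction_def)
  then show ?thesis using assms(2) by linarith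
qed

lemma nu_le_nu_plus:
  assumes formula: "stirling_v2_formula n" and "2 \<le> n" "1 \<le> t" "t < j" "j \<le> 2 ^ n"
    and "j = t + 1 \<Longrightarrow> even t"
  shows "nu n t + 2 \<le> nu n j + n * (j - t)"
proof -
  note bounds = correction_bounds[OF formula assms(2)]
  have nu: "int (nu n s) = main_term n s + correction n s" for s
    by (simp add: correction_def)
  have "int (nu n t) + 2 \<le> int (nu n j) + int n * (int j - int t)"
  proof (cases "j = t + 1")
    case True
    then show ?thesis
      using nu[of t] nu[of j] main_term_Suc[of n t] block_ge_2[OF assms(3)]
        bounds(3)[of t] bounds(4)[of j] assms(3-6) by simp
  next
    case False
    then have "t + 1 \<le> j - 1" "1 \<le> j - 1" "j - 1 + 1 = j" using assms(3,4) by auto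
    moreover note main_term_diff_le[OF _ \<open>t + 1 \<le> j - 1\<close>, of n]
      main_term_Suc[of n t] main_term_Suc[of n "j - 1"] block_Suc[of "j - 1"]
    moreover have "(int n - 2) * (int j - int t - 2) \<le> int n * (int j - int t - 2)"
      using False assms(4) by (intro mult_right_mono) auto
    ultimately show ?thesis
      using nu[of t] nu[of j] bounds(2)[of t] bounds(1)[of j] assms(3-5)
      by (simp add: algebra_simps split: if_splits)
  qed
  moreover have "int n * (int j - int t) = int (n * (j - t))"
    using assms(4) by simp
  ultimately show ?thesis by linarith
qed

lemma pow2_dvd_tail_term:
  assumes formula: "stirling_v2_formula n" and "2 \<le> n" "1 \<le> t" "t < k" "k \<le> 2 ^ n"
  shows "2 ^ (nu n t + 2) dvd int (stirling (2 ^ n) k * (k choose t) * (2 ^ n) ^ (k - t))"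
proof -
  have stirling: "2 ^ nu n k dvd int (stirling (2 ^ n) k)"
    unfolding nu_def by (rule multiplicity_dvd)
  have "int (stirling (2 ^ n) k * (k choose t) * (2 ^ n) ^ (k - t))
      = int (stirling (2 ^ n) k) * int (k choose t) * 2 ^ (n * (k - t))"
    by (simp add: power_mult)
  moreover have "2 ^ (nu n t + 2) dvd int (stirling (2 ^ n) k) * int (k choose t) * 2 ^ (n * (k - t))"
  proof (cases "k = t + 1 \<and> odd t")
    case True
    then have exponent: "nu n t + 2 = nu n k + 1 + n * (k - t)"
      using nu_Suc_of_odd[OF formula assms(2,3)] assms(2,5) by simp
    have "2 ^ 1 dvd int (k choose t)"
      using True by simp
    then show ?thesis
      unfolding exponent power_add by (intro mult_dvd_mono stirling) simp_all
  next
    case False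
    then have "nu n t + 2 \<le> nu n k + n * (k - t)"
      using nu_le_nu_plus[OF formula assms(2-5)] by blast
    moreover have "2 ^ (nu n k + n * (k - t)) dvd int (stirling (2 ^ n) k) * int (k choose t) * 2 ^ (n * (k - t))"
      unfolding power_add by (intro mult_dvd_mono dvd_mult2 stirling) simp_all
    ultimately show ?thesis
      by (meson dvd_trans le_imp_power_dvd)
  qed
  ultimately show ?thesis by (simp only:)
qed

theorem lemma2p4:
  fixes n :: nat
  assumes "n \<ge> 2"
    and "\<forall>m k. 2 \<le> m \<and> m \<le> n \<and> 2 \<le> k \<and> k \<le> 2 ^ (m - 1) + 1 \<longrightarrow>
      v2 (int (stirling (2 ^ n) (2 ^ m - k))) =
        ereal (real_of_int (2 ^ n - 2 ^ m - (int n - int m) * (2 ^ m - 2 * int (k div 2))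
                 + int m - 2 + (int n - 1) * (if even k then 0 else 1)))
        - v2 (int (k div 2))"
  shows "\<forall>t. 1 \<le> t \<and> t \<le> 2 ^ n \<longrightarrow>
      v2 (int (stirling_shift (2 ^ n) (2 ^ n) t)) = v2 (int (stirling (2 ^ n) t)) \<and>
      v2 (int (stirling_shift (2 ^ n) (2 ^ n) t) - int (stirling (2 ^ n) t))
        \<ge> v2 (int (stirling (2 ^ n) t)) + 2"
proof (intro allI impI)
  fix t :: nat
  assume t: "1 \<le> t \<and> t \<le> 2 ^ n"
  have formula: "stirling_v2_formula n"
    unfolding stirling_v2_formula_def using assms(2) .
  define tail where "tail = (\<Sum>k\<in>{t<..2 ^ n}. stirling (2 ^ n) k * (k choose t) * (2 ^ n) ^ (k - t))"
  have shift: "int (stirling_shift (2 ^ n) (2 ^ n) t) = int (stirling (2 ^ n) t) + int tail"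
    using stirling_shift_eq_stirling_plus_tail[of t "2 ^ n" "2 ^ n"] t unfolding tail_def by simp
  have "2 ^ (multiplicity 2 (int (stirling (2 ^ n) t)) + 2) dvd int tail"
    unfolding tail_def of_nat_sum nu_def[symmetric]
    by (intro dvd_sum pow2_dvd_tail_term[OF formula assms(1)]) (use t in auto)
  moreover have "int (stirling (2 ^ n) t) \<noteq> 0"
    using stirling_pos[of t "2 ^ n"] t by simp
  ultimately show "v2 (int (stirling_shift (2 ^ n) (2 ^ n) t)) = v2 (int (stirling (2 ^ n) t)) \<and>
      v2 (int (stirling_shift (2 ^ n) (2 ^ n) t) - int (stirling (2 ^ n) t))
        \<ge> v2 (int (stirling (2 ^ n) t)) + 2"
    unfolding shift using v2_add_of_higher by simp
qed

end
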